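(* Consider estimation of the open-loop scalar system $\dot X(t)=aX(t)$, $a>0$, with random initial state $|X(0)|<L$, over the timing channel described in the context. If there exists $\Gamma_0>1$ such that along the sequence of estimation times $t_n=\Gamma_0\,\mathbb{E}(\mathcal{T}_n)$ the estimates satisfy $|X(t_n)-\hat X(t_n)|\to0$ in probability as $n\to\infty$, then there is an estimator with $|X(t)-\hat X(t)|\to0$ in probability as $t\to\infty$.
   Context: Timing channel: symbols from a one-element alphabet; initialized with a symbol received at time $0$; after the acknowledgment of the $i$-th reception the sender waits $W_{i+1}\ge0$ and transmits the next symbol, received after a random delay $S_{i+1}\ge0$; the $W_i$ are i.i.d. (random codebook), the $S_i$ are i.i.d. and independent of the $W_i$; $D_i=W_i+S_i$, $\mathcal{T}_n=\sum_{i=1}^nD_i$. The estimator at time $t$ uses the inter-reception times of all symbols received up to time $t$, $L$ and the dynamics. *)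

theory Defs
  imports "HOL-Probability.Probability"
begin

text \<open>Reception time of the i-th symbol (i \<ge> 1) given the inter-reception times d:
  T_i = d 1 + ... + d i.  (Index 0 is unused; the initial symbol arrives at time 0.)\<close>
definition arrival :: "(nat \<Rightarrow> real) \<Rightarrow> nat \<Rightarrow> real" where
  "arrival d i = (\<Sum>j=1..i. d j)"

definition obs_eq :: "real \<Rightarrow> (nat \<Rightarrow> real) \<Rightarrow> (nat \<Rightarrow> real) \<Rightarrow> bool" where
  "obs_eq t d d' \<longleftrightarrow> (\<forall>i\<ge>1. (arrival d i \<le> t \<longleftrightarrow> arrival d' i \<le> t)
                             \<and> (arrival d i \<le> t \<longrightarrow> d i = d' i))"

text \<open>An estimator maps the time t and the inter-reception sequence to an estimate; it is
  admissible (causal) if at time t it only depends on the inter-reception times of the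
  symbols received up to time t. (L and the dynamics a are fixed parameters, so they may be
  used freely.)\<close>
definition causal_estimator :: "(real \<Rightarrow> (nat \<Rightarrow> real) \<Rightarrow> real) \<Rightarrow> bool" where
  "causal_estimator e \<longleftrightarrow> (\<forall>t d d'. obs_eq t d d' \<longrightarrow> e t d = e t d')"

end

theory Submission
  imports Defs
begin

text \<open>Since the increments are identically distributed, the estimation times
  t_n = \<Gamma>0 E(T_n) = n h, with h = \<Gamma>0 E(D_1), form a regular grid. At time t the new
  estimator takes the last grid estimate, at s = t_N \<le> t, and propagates it through the
  dynamics, multiplying it by exp(a (t - s)). The error is then multiplied by the same
  factor, which is at most exp(a h); since N \<rightarrow> \<infinity> as t \<rightarrow> \<infinity>, convergence in probability
  along the grid carries over to all times. If h = 0 the grid collapses to the single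
  time 0, where the error then vanishes almost surely.\<close>

definition received_prefix :: "real \<Rightarrow> (nat \<Rightarrow> real) \<Rightarrow> bool" where
  "received_prefix t d \<longleftrightarrow> (\<forall>i\<ge>1. arrival d i \<le> t \<longrightarrow> (\<forall>j\<in>{1..i}. arrival d j \<le> t))"

lemma obs_eq_sym: "obs_eq t d d' \<Longrightarrow> obs_eq t d' d"
  unfolding obs_eq_def by auto

lemma received_prefix_obs_eq:
  assumes "obs_eq t d d'" and "received_prefix t d"
  shows "received_prefix t d'"
  using assms unfolding received_prefix_def obs_eq_def
  by (metis atLeastAtMost_iff)

lemma arrival_obs_eq:
  assumes "obs_eq t d d'" "received_prefix t d" "i \<ge> 1" "arrival d i \<le> t"
  shows "arrival d' i = arrival d i"
proof -
  have "\<forall>j\<in>{1..i}. arrival d j \<le> t"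
    using assms(2-4) unfolding received_prefix_def by blast
  then have "\<forall>j\<in>{1..i}. d j = d' j"
    using assms(1) unfolding obs_eq_def by auto
  then show ?thesis
    unfolding arrival_def by (metis (no_types, lifting) sum.cong)
qed

lemma obs_eq_earlier:
  assumes "obs_eq t d d'" "received_prefix t d" "s \<le> t"
  shows "obs_eq s d d'"
proof -
  have prefix': "received_prefix t d'" and obs': "obs_eq t d' d"
    using assms received_prefix_obs_eq obs_eq_sym by blast+
  have received_iff: "arrival d i \<le> s \<longleftrightarrow> arrival d' i \<le> s" if "i \<ge> 1" for i
  proof
    assume "arrival d i \<le> s"
    then show "arrival d' i \<le> s" using arrival_obs_eq[OF assms(1,2) that] assms(3) by auto
  next
    assume "arrival d' i \<le> s"
    then show "arrival d i \<le> s" using arrival_obs_eq[OF obs' prefix' that] assms(3) by auto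
  qed
  have "d i = d' i" if "i \<ge> 1" "arrival d i \<le> s" for i
    using assms(1,3) that unfolding obs_eq_def by (meson order_trans)
  with received_iff show ?thesis
    unfolding obs_eq_def by (intro allI impI conjI) simp_all
qed

lemma received_prefix_nonneg:
  assumes "\<forall>i\<ge>1. d i \<ge> 0"
  shows "received_prefix t d"
  unfolding received_prefix_def
proof (intro allI impI ballI)
  fix i j assume "arrival d i \<le> t" "j \<in> {1..i}"
  moreover have "arrival d j \<le> arrival d i"
    unfolding arrival_def using \<open>j \<in> {1..i}\<close> assms by (intro sum_mono2) auto
  ultimately show "arrival d j \<le> t" by linarith
qed

text \<open>The guard makes the estimator causal for arbitrary (also negative) increments: when the
  symbols received by t form a prefix, indistinguishability at t implies it at s \<le> t.\<close>
definition extrapolate ::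
    "real \<Rightarrow> (real \<Rightarrow> (nat \<Rightarrow> real) \<Rightarrow> real) \<Rightarrow> (real \<Rightarrow> real) \<Rightarrow> real \<Rightarrow> (nat \<Rightarrow> real) \<Rightarrow> real" where
  "extrapolate a e s t d =
     (if s t \<le> t \<and> received_prefix t d then exp (a * (t - s t)) * e (s t) d else 0)"

lemma causal_estimator_extrapolate:
  assumes "causal_estimator e"
  shows "causal_estimator (extrapolate a e s)"
  unfolding causal_estimator_def
proof (intro allI impI)
  fix t d d' assume obs: "obs_eq t d d'"
  have prefix_iff: "received_prefix t d \<longleftrightarrow> received_prefix t d'"
    using received_prefix_obs_eq obs obs_eq_sym by blast
  show "extrapolate a e s t d = extrapolate a e s t d'"
  proof (cases "s t \<le> t \<and> received_prefix t d")
    case True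
    then have "e (s t) d = e (s t) d'"
      using obs_eq_earlier obs assms unfolding causal_estimator_def by blast
    then show ?thesis using True prefix_iff by (simp add: extrapolate_def)
  qed (use prefix_iff in \<open>auto simp: extrapolate_def\<close>)
qed

lemma abs_exp_extrapolation_error:
  fixes a t s x y :: real
  shows "\<bar>exp (a * t) * x - exp (a * (t - s)) * y\<bar> = exp (a * (t - s)) * \<bar>exp (a * s) * x - y\<bar>"
proof -
  have "exp (a * t) = exp (a * (t - s)) * exp (a * s)"
    by (simp add: mult_exp_exp algebra_simps)
  then have "exp (a * t) * x - exp (a * (t - s)) * y = exp (a * (t - s)) * (exp (a * s) * x - y)"
    by (simp add: algebra_simps)
  then show ?thesis by (simp add: abs_mult)
qed

lemma measure_tail_scaled_le:
  fixes f g :: "'a \<Rightarrow> real"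
  assumes "finite_measure M" "{\<omega> \<in> space M. \<delta> < g \<omega>} \<in> sets M"
    and "AE \<omega> in M. f \<omega> = c * g \<omega>" "c > 0" "\<delta> * c \<le> \<epsilon>"
  shows "measure M {\<omega> \<in> space M. \<epsilon> < f \<omega>} \<le> measure M {\<omega> \<in> space M. \<delta> < g \<omega>}"
proof -
  have "AE \<omega> in M. \<omega> \<in> {\<omega> \<in> space M. \<epsilon> < f \<omega>} \<longrightarrow> \<omega> \<in> {\<omega> \<in> space M. \<delta> < g \<omega>}"
    using assms(3)
  proof eventually_elim
    case (elim \<omega>)
    show ?case
    proof
      assume "\<omega> \<in> {\<omega> \<in> space M. \<epsilon> < f \<omega>}"
      then have "\<epsilon> < c * g \<omega>" using elim by simp
      then have "\<delta> * c < c * g \<omega>" using assms(5) by linarith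
      then have "\<delta> * c < g \<omega> * c" by (simp add: mult.commute)
      then show "\<omega> \<in> {\<omega> \<in> space M. \<delta> < g \<omega>}"
        using \<open>\<omega> \<in> {\<omega> \<in> space M. \<epsilon> < f \<omega>}\<close> assms(4) by simp
    qed
  qed
  then show ?thesis
    using finite_measure.finite_measure_mono_AE[OF assms(1) _ assms(2)] by blast
qed

lemma borel_measurable_arrival:
  assumes "\<And>i. i \<ge> 1 \<Longrightarrow> D i \<in> borel_measurable M"
  shows "(\<lambda>\<omega>. arrival (\<lambda>i. D i \<omega>) k) \<in> borel_measurable M"
  unfolding arrival_def using assms by (intro borel_measurable_sum) auto

lemma sets_received_prefix:
  assumes "\<And>i. i \<ge> 1 \<Longrightarrow> D i \<in> borel_measurable M"
  shows "{\<omega> \<in> space M. received_prefix t (\<lambda>i. D i \<omega>)} \<in> sets M"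
proof -
  note borel_measurable_arrival[OF assms, measurable]
  show ?thesis unfolding received_prefix_def by measurable
qed

lemma grid_floor_le:
  fixes h t :: real
  assumes "0 \<le> h" "0 \<le> t"
  shows "real (nat \<lfloor>t / h\<rfloor>) * h \<le> t"
proof (cases "h = 0")
  case False
  then have "real_of_int \<lfloor>t / h\<rfloor> * h \<le> t / h * h"
    using assms by (intro mult_right_mono of_int_floor_le) auto
  then show ?thesis using assms False by simp
qed (use assms in simp)

lemma grid_floor_gap:
  fixes h t :: real
  assumes "0 < h" "0 \<le> t"
  shows "t - real (nat \<lfloor>t / h\<rfloor>) * h < h"
proof -
  have "t / h * h < (real_of_int \<lfloor>t / h\<rfloor> + 1) * h"
    using assms by (intro mult_strict_right_mono real_of_int_floor_add_one_gt) auto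
  then show ?thesis using assms by (simp add: algebra_simps)
qed

lemma exp_grid_gap_le:
  fixes a h t :: real
  assumes "0 \<le> a" "0 < h" "0 \<le> t"
  shows "exp (- (a * h)) * exp (a * (t - real (nat \<lfloor>t / h\<rfloor>) * h)) \<le> 1"
proof -
  have "a * (t - real (nat \<lfloor>t / h\<rfloor>) * h) \<le> a * h"
    using grid_floor_gap[OF assms(2,3)] assms(1) by (intro mult_left_mono) auto
  then show ?thesis by (simp flip: exp_add)
qed

lemma filterlim_grid_floor:
  fixes h :: real
  assumes "0 < h"
  shows "filterlim (\<lambda>t. nat \<lfloor>t / h\<rfloor>) at_top at_top"
  unfolding filterlim_at_top
proof
  fix Z :: nat
  show "eventually (\<lambda>t. Z \<le> nat \<lfloor>t / h\<rfloor>) at_top"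
    using eventually_ge_at_top[of "real Z * h"]
  proof eventually_elim
    case (elim t)
    then have "real Z \<le> t / h" using assms by (simp add: pos_le_divide_eq)
    then show ?case by (simp add: le_nat_iff le_floor_iff)
  qed
qed

lemma borel_measurable_extrapolate:
  assumes "\<And>i. i \<ge> 1 \<Longrightarrow> D i \<in> borel_measurable M"
    and "(\<lambda>\<omega>. e (s t) (\<lambda>i. D i \<omega>)) \<in> borel_measurable M"
  shows "(\<lambda>\<omega>. extrapolate a e s t (\<lambda>i. D i \<omega>)) \<in> borel_measurable M"
  unfolding extrapolate_def
  using assms sets_received_prefix[OF assms(1)] by (cases "s t \<le> t") (simp_all add: measurable_If)

lemma measure_extrapolation_error_le:
  fixes D :: "nat \<Rightarrow> 'w \<Rightarrow> real"
  assumes "prob_space M" "X0 \<in> borel_measurable M"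
    and D_nonneg: "AE \<omega> in M. \<forall>i\<ge>1. 0 \<le> D i \<omega>"
    and e_meas: "(\<lambda>\<omega>. e (s t) (\<lambda>i. D i \<omega>)) \<in> borel_measurable M"
    and "s t \<le> t" "\<delta> * exp (a * (t - s t)) \<le> \<epsilon>"
  shows "measure M {\<omega> \<in> space M. \<bar>exp (a * t) * X0 \<omega> - extrapolate a e s t (\<lambda>i. D i \<omega>)\<bar> > \<epsilon>}
    \<le> measure M {\<omega> \<in> space M. \<bar>exp (a * s t) * X0 \<omega> - e (s t) (\<lambda>i. D i \<omega>)\<bar> > \<delta>}"
proof (rule measure_tail_scaled_le)
  show "finite_measure M" using assms(1) by (simp add: prob_space_def)
  show "{\<omega> \<in> space M. \<delta> < \<bar>exp (a * s t) * X0 \<omega> - e (s t) (\<lambda>i. D i \<omega>)\<bar>} \<in> sets M"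
    using assms(2) e_meas by measurable
  show "AE \<omega> in M. \<bar>exp (a * t) * X0 \<omega> - extrapolate a e s t (\<lambda>i. D i \<omega>)\<bar>
      = exp (a * (t - s t)) * \<bar>exp (a * s t) * X0 \<omega> - e (s t) (\<lambda>i. D i \<omega>)\<bar>"
    using D_nonneg
  proof eventually_elim
    case (elim \<omega>)
    then have "received_prefix t (\<lambda>i. D i \<omega>)" by (intro received_prefix_nonneg) auto
    then show ?case
      using \<open>s t \<le> t\<close> by (simp add: extrapolate_def abs_exp_extrapolation_error)
  qed
qed (use assms in simp_all)

lemma integrable_integral_eq_if_distr_eq:
  fixes X Y :: "'a \<Rightarrow> real"
  assumes "X \<in> borel_measurable M" "Y \<in> borel_measurable M"
    and "distr M borel X = distr M borel Y" "integrable M Y"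
  shows "integrable M X \<and> integral\<^sup>L M X = integral\<^sup>L M Y"
proof -
  have "integrable M X \<longleftrightarrow> integrable M Y"
    using integrable_distr_eq[OF assms(1), of "\<lambda>x. x"] integrable_distr_eq[OF assms(2), of "\<lambda>x. x"]
      assms(3) by simp
  moreover have "integral\<^sup>L M X = integral\<^sup>L M Y"
    using integral_distr[OF assms(1), of "\<lambda>x. x"] integral_distr[OF assms(2), of "\<lambda>x. x"]
      assms(3) by simp
  ultimately show ?thesis using assms(4) by simp
qed

lemma integral_sum_identical:
  fixes X :: "nat \<Rightarrow> 'a \<Rightarrow> real"
  assumes "\<And>i. i \<in> I \<Longrightarrow> integrable M (X i)" "\<And>i. i \<in> I \<Longrightarrow> integral\<^sup>L M (X i) = m"
  shows "(\<integral>\<omega>. (\<Sum>i\<in>I. X i \<omega>) \<partial>M) = real (card I) * m"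
  using assms by (simp add: Bochner_Integration.integral_sum)

lemma (in prob_space) indep_vars_Plus_measurable:
  assumes "indep_vars (\<lambda>_. borel) (\<lambda>k. case k of Inl i \<Rightarrow> X i | Inr j \<Rightarrow> Y j) (I <+> J)"
  shows "i \<in> I \<Longrightarrow> X i \<in> borel_measurable M" and "j \<in> J \<Longrightarrow> Y j \<in> borel_measurable M"
proof -
  have rv: "\<forall>k\<in>I <+> J. (case k of Inl i \<Rightarrow> X i | Inr j \<Rightarrow> Y j) \<in> borel_measurable M"
    using assms unfolding indep_vars_def by blast
  show "i \<in> I \<Longrightarrow> X i \<in> borel_measurable M"
    using bspec[OF rv InlI[of i I J]] by (simp only: sum.case)
  show "j \<in> J \<Longrightarrow> Y j \<in> borel_measurable M"
    using bspec[OF rv InrI[of j J I]] by (simp only: sum.case)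
qed

lemma integral_sum_identically_distributed:
  fixes W S :: "nat \<Rightarrow> 'a \<Rightarrow> real"
  assumes W_meas: "\<And>i. i \<ge> 1 \<Longrightarrow> W i \<in> borel_measurable M"
    and S_meas: "\<And>i. i \<ge> 1 \<Longrightarrow> S i \<in> borel_measurable M"
    and W_ident: "\<forall>i\<ge>1. distr M borel (W i) = distr M borel (W 1)"
    and S_ident: "\<forall>i\<ge>1. distr M borel (S i) = distr M borel (S 1)"
    and "integrable M (W 1)" "integrable M (S 1)"
  shows "(\<integral>\<omega>. (\<Sum>i=1..n. W i \<omega> + S i \<omega>) \<partial>M) = real n * (integral\<^sup>L M (W 1) + integral\<^sup>L M (S 1))"
proof -
  have "integrable M (\<lambda>\<omega>. W i \<omega> + S i \<omega>)
    \<and> (\<integral>\<omega>. W i \<omega> + S i \<omega> \<partial>M) = integral\<^sup>L M (W 1) + integral\<^sup>L M (S 1)"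
    if "i \<in> {1..n}" for i
  proof -
    from that have "i \<ge> 1" by simp
    from integrable_integral_eq_if_distr_eq[OF W_meas[OF this] W_meas[OF order_refl]
          W_ident[rule_format, OF this] assms(5)]
      integrable_integral_eq_if_distr_eq[OF S_meas[OF this] S_meas[OF order_refl]
          S_ident[rule_format, OF this] assms(6)]
    show ?thesis by simp
  qed
  then show ?thesis
    using integral_sum_identical[where I = "{1..n}" and X = "\<lambda>i \<omega>. W i \<omega> + S i \<omega>"] by simp
qed

lemma AE_nonneg_add_all:
  fixes W S :: "nat \<Rightarrow> 'a \<Rightarrow> real"
  assumes "\<forall>i\<ge>1. AE \<omega> in M. W i \<omega> \<ge> 0" "\<forall>i\<ge>1. AE \<omega> in M. S i \<omega> \<ge> 0"
  shows "AE \<omega> in M. \<forall>i\<ge>1. 0 \<le> W i \<omega> + S i \<omega>"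
  unfolding AE_all_countable
proof
  fix i :: nat
  show "AE \<omega> in M. 1 \<le> i \<longrightarrow> 0 \<le> W i \<omega> + S i \<omega>"
  proof (cases "1 \<le> i")
    case True
    with assms have "AE \<omega> in M. 0 \<le> W i \<omega>" "AE \<omega> in M. 0 \<le> S i \<omega>" by blast+
    then show ?thesis by eventually_elim simp
  qed simp
qed

lemma tendsto_zero_from_grid:
  fixes err q :: "real \<Rightarrow> real \<Rightarrow> real" and a h \<epsilon> :: real
  assumes "0 \<le> a" "0 \<le> h" "\<epsilon> > 0"
    and err_nonneg: "\<And>t. 0 \<le> err t \<epsilon>"
    and err_le: "\<And>t \<delta>. 0 \<le> t \<Longrightarrow> \<delta> * exp (a * (t - real (nat \<lfloor>t / h\<rfloor>) * h)) \<le> \<epsilon>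
      \<Longrightarrow> err t \<epsilon> \<le> q (real (nat \<lfloor>t / h\<rfloor>) * h) \<delta>"
    and q_lim: "\<And>\<delta>. \<delta> > 0 \<Longrightarrow> (\<lambda>n. q (real n * h) \<delta>) \<longlonglongrightarrow> 0"
  shows "((\<lambda>t. err t \<epsilon>) \<longlongrightarrow> 0) at_top"
proof -
  obtain b where b_bound: "\<And>t. 0 \<le> t \<Longrightarrow> err t \<epsilon> \<le> b t" and b_lim: "(b \<longlongrightarrow> 0) at_top"
  proof (cases "h = 0")
    case True
    \<comment> \<open>then t / h = 0, so the grid is the single time 0, where q vanishes\<close>
    have "err t \<epsilon> \<le> 0" if "0 \<le> t" for t
    proof -
      have "err t \<epsilon> \<le> q 0 (\<epsilon> * exp (- (a * t)))"
        using err_le[OF that, of "\<epsilon> * exp (- (a * t))"] True by (simp add: mult.assoc flip: exp_add)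
      also have "\<dots> = 0"
        using q_lim[of "\<epsilon> * exp (- (a * t))"] \<open>\<epsilon> > 0\<close> True by (simp add: LIMSEQ_const_iff)
      finally show ?thesis .
    qed
    then show ?thesis by (rule that[OF _ tendsto_const])
  next
    case False
    with \<open>0 \<le> h\<close> have "0 < h" by simp
    define \<delta> where "\<delta> = \<epsilon> * exp (- (a * h))"
    have "err t \<epsilon> \<le> q (real (nat \<lfloor>t / h\<rfloor>) * h) \<delta>" if "0 \<le> t" for t
    proof (rule err_le[OF that])
      show "\<delta> * exp (a * (t - real (nat \<lfloor>t / h\<rfloor>) * h)) \<le> \<epsilon>"
        using exp_grid_gap_le[OF \<open>0 \<le> a\<close> \<open>0 < h\<close> that] \<open>\<epsilon> > 0\<close>
        unfolding \<delta>_def by (simp add: mult.assoc mult_left_le)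
    qed
    moreover have "(\<lambda>n. q (real n * h) \<delta>) \<longlonglongrightarrow> 0"
      using \<open>\<epsilon> > 0\<close> by (intro q_lim) (simp add: \<delta>_def)
    then have "((\<lambda>t. q (real (nat \<lfloor>t / h\<rfloor>) * h) \<delta>) \<longlongrightarrow> 0) at_top"
      by (rule filterlim_compose[OF _ filterlim_grid_floor[OF \<open>0 < h\<close>]])
    ultimately show ?thesis by (rule that)
  qed
  show ?thesis
  proof (rule tendsto_sandwich[OF _ _ tendsto_const b_lim])
    show "eventually (\<lambda>t. 0 \<le> err t \<epsilon>) at_top" by (simp add: err_nonneg)
    show "eventually (\<lambda>t. err t \<epsilon> \<le> b t) at_top"
      using eventually_ge_at_top[of 0] by (rule eventually_mono) (rule b_bound)
  qed
qed

lemma extrapolated_estimator_consistent: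
  fixes M :: "'w measure" and D :: "nat \<Rightarrow> 'w \<Rightarrow> real" and a h :: real
  assumes M: "prob_space M" and "0 \<le> a" "0 \<le> h"
    and X0_meas: "X0 \<in> borel_measurable M"
    and D_meas: "\<And>i. i \<ge> 1 \<Longrightarrow> D i \<in> borel_measurable M"
    and D_nonneg: "AE \<omega> in M. \<forall>i\<ge>1. 0 \<le> D i \<omega>"
    and e_causal: "causal_estimator e"
    and e_meas: "\<And>t. (\<lambda>\<omega>. e t (\<lambda>i. D i \<omega>)) \<in> borel_measurable M"
    and conv: "\<And>\<delta>. \<delta> > 0 \<Longrightarrow> (\<lambda>n. measure M {\<omega> \<in> space M.
      \<bar>exp (a * (real n * h)) * X0 \<omega> - e (real n * h) (\<lambda>i. D i \<omega>)\<bar> > \<delta>}) \<longlonglongrightarrow> 0"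
  shows "\<exists>e'. causal_estimator e'
    \<and> (\<forall>t. (\<lambda>\<omega>. e' t (\<lambda>i. D i \<omega>)) \<in> borel_measurable M)
    \<and> (\<forall>\<epsilon>>0. ((\<lambda>t. measure M {\<omega> \<in> space M.
          \<bar>exp (a * t) * X0 \<omega> - e' t (\<lambda>i. D i \<omega>)\<bar> > \<epsilon>}) \<longlongrightarrow> 0) at_top)"
proof (intro exI conjI allI impI)
  define s where "s t = real (nat \<lfloor>t / h\<rfloor>) * h" for t
  define q where "q u \<delta> = measure M {\<omega> \<in> space M.
      \<bar>exp (a * u) * X0 \<omega> - e u (\<lambda>i. D i \<omega>)\<bar> > \<delta>}" for u \<delta>
  show "causal_estimator (extrapolate a e s)"
    using e_causal by (rule causal_estimator_extrapolate)
  show "(\<lambda>\<omega>. extrapolate a e s t (\<lambda>i. D i \<omega>)) \<in> borel_measurable M" for t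
    using D_meas e_meas by (rule borel_measurable_extrapolate)
  fix \<epsilon> :: real assume "\<epsilon> > 0"
  show "((\<lambda>t. measure M {\<omega> \<in> space M.
      \<bar>exp (a * t) * X0 \<omega> - extrapolate a e s t (\<lambda>i. D i \<omega>)\<bar> > \<epsilon>}) \<longlongrightarrow> 0) at_top"
  proof (rule tendsto_zero_from_grid[where q = q, OF \<open>0 \<le> a\<close> \<open>0 \<le> h\<close> \<open>\<epsilon> > 0\<close>])
    show "\<delta> > 0 \<Longrightarrow> (\<lambda>n. q (real n * h) \<delta>) \<longlonglongrightarrow> 0" for \<delta>
      unfolding q_def by (rule conv)
    show "measure M {\<omega> \<in> space M. \<bar>exp (a * t) * X0 \<omega> - extrapolate a e s t (\<lambda>i. D i \<omega>)\<bar> > \<epsilon>}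
        \<le> q (real (nat \<lfloor>t / h\<rfloor>) * h) \<delta>"
      if "0 \<le> t" "\<delta> * exp (a * (t - real (nat \<lfloor>t / h\<rfloor>) * h)) \<le> \<epsilon>" for t \<delta>
      using measure_extrapolation_error_le[where s = s and t = t, OF M X0_meas D_nonneg e_meas]
        grid_floor_le[OF \<open>0 \<le> h\<close> that(1)] that(2)
      unfolding q_def s_def by simp
  qed simp
qed

theorem lemma2:
  fixes M :: "'w measure" and a L \<Gamma>\<^sub>0 :: real
    and X0 :: "'w \<Rightarrow> real" and W S :: "nat \<Rightarrow> 'w \<Rightarrow> real"
  assumes P: "prob_space M"
    and a_pos: "a > 0"
    and X0_meas: "X0 \<in> borel_measurable M"
    and X0_bound: "AE \<omega> in M. \<bar>X0 \<omega>\<bar> < L"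
    and indep: "prob_space.indep_vars M (\<lambda>_. borel)
                  (\<lambda>k. case k of Inl i \<Rightarrow> W i | Inr i \<Rightarrow> S i) ({1..} <+> {1..})"
    and W_ident: "\<forall>i\<ge>1. distr M borel (W i) = distr M borel (W 1)"
    and S_ident: "\<forall>i\<ge>1. distr M borel (S i) = distr M borel (S 1)"
    and W_nonneg: "\<forall>i\<ge>1. AE \<omega> in M. W i \<omega> \<ge> 0"
    and S_nonneg: "\<forall>i\<ge>1. AE \<omega> in M. S i \<omega> \<ge> 0"
    and W_int: "integrable M (W 1)"
    and S_int: "integrable M (S 1)"
    and Gamma: "\<Gamma>\<^sub>0 > 1"
    and hyp: "\<exists>e. causal_estimator e
                \<and> (\<forall>t. (\<lambda>\<omega>. e t (\<lambda>i. W i \<omega> + S i \<omega>)) \<in> borel_measurable M)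
                \<and> (\<forall>\<epsilon>>0. (\<lambda>n. measure M {\<omega> \<in> space M.
                      \<bar>exp (a * (\<Gamma>\<^sub>0 * (\<integral>\<omega>'. (\<Sum>i=1..n. W i \<omega>' + S i \<omega>') \<partial>M))) * X0 \<omega>
                       - e (\<Gamma>\<^sub>0 * (\<integral>\<omega>'. (\<Sum>i=1..n. W i \<omega>' + S i \<omega>') \<partial>M))
                           (\<lambda>i. W i \<omega> + S i \<omega>)\<bar> > \<epsilon>}) \<longlonglongrightarrow> 0)"
  shows "\<exists>e. causal_estimator e
           \<and> (\<forall>t. (\<lambda>\<omega>. e t (\<lambda>i. W i \<omega> + S i \<omega>)) \<in> borel_measurable M)
           \<and> (\<forall>\<epsilon>>0. ((\<lambda>t. measure M {\<omega> \<in> space M.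
                 \<bar>exp (a * t) * X0 \<omega> - e t (\<lambda>i. W i \<omega> + S i \<omega>)\<bar> > \<epsilon>}) \<longlongrightarrow> 0) at_top)"
proof -
  interpret prob_space M by (rule P)
  have W_meas: "W i \<in> borel_measurable M" and S_meas: "S i \<in> borel_measurable M"
    if "i \<ge> 1" for i
    using indep_vars_Plus_measurable[OF indep] that by simp_all
  define h where "h = \<Gamma>\<^sub>0 * (integral\<^sup>L M (W 1) + integral\<^sup>L M (S 1))"
  have expected_arrival: "\<Gamma>\<^sub>0 * (\<integral>\<omega>'. (\<Sum>i=1..n. W i \<omega>' + S i \<omega>') \<partial>M) = real n * h" for n
    using integral_sum_identically_distributed[OF W_meas S_meas W_ident S_ident W_int S_int]
    unfolding h_def by simp
  have "0 \<le> h"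
    using Gamma integral_nonneg_AE[OF W_nonneg[rule_format, OF order_refl]]
      integral_nonneg_AE[OF S_nonneg[rule_format, OF order_refl]]
    unfolding h_def by simp
  from hyp obtain e where "causal_estimator e"
    and "\<And>t. (\<lambda>\<omega>. e t (\<lambda>i. W i \<omega> + S i \<omega>)) \<in> borel_measurable M"
    and "\<And>\<delta>. \<delta> > 0 \<Longrightarrow> (\<lambda>n. measure M {\<omega> \<in> space M.
      \<bar>exp (a * (real n * h)) * X0 \<omega> - e (real n * h) (\<lambda>i. W i \<omega> + S i \<omega>)\<bar> > \<delta>}) \<longlonglongrightarrow> 0"
    unfolding expected_arrival by blast
  with AE_nonneg_add_all[OF W_nonneg S_nonneg] W_meas S_meas show ?thesis
    by (intro extrapolated_estimator_consistent[OF P _ \<open>0 \<le> h\<close> X0_meas]) (use a_pos in auto)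
qed

end
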